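(* Let $(\mathcal{S},d_{\mathcal{S}})$ be a metric state space, $\mathcal{A}$ a finite action set, $\gamma\in[0,1)$, $R:\mathcal{S}\times\mathcal{A}\to\mathbb{R}$ a reward with finite $K^{\mathcal{A}}_{d_{\mathcal{S}},\mathbb{R}}(R)$, and $T$ a transition kernel with $\gamma K^{\mathcal{A}}_{d_{\mathcal{S}},W}(T)<1$. Let $f:\mathbb{R}^{|\mathcal{A}|}\to\mathbb{R}$ be one of the backup operators $\max$, $\mathrm{mean}$, $\epsilon$-greedy, or mellowmax $mm_\beta(x)=\frac{1}{\beta}\log\big(\frac{1}{|\mathcal{A}|}\sum_i e^{\beta x_i}\big)$. Consider Generalized Value Iteration (GVI): starting from $\widehat Q_0$ with finite $K^{\mathcal{A}}_{d_{\mathcal{S}},\mathbb{R}}(\widehat Q_0)$, iterate $\widehat Q_{n+1}(s,a)=R(s,a)+\gamma\int T(s'\mid s,a)\,f\big(\widehat Q_n(s',\cdot)\big)\,ds'$. Then the value function computed by GVI has Lipschitz constant bounded by $\frac{K^{\mathcal{A}}_{d_{\mathcal{S}},\mathbb{R}}(R)}{1-\gamma K^{\mathcal{A}}_{d_{\mathcal{S}},W}(T)}$; precisely, $\lim_{n\to\infty}K^{\mathcal{A}}_{d_{\mathcal{S}},\mathbb{R}}(\widehat Q_{n})\le\frac{K^{\mathcal{A}}_{d_{\mathcal{S}},\mathbb{R}}(R)}{1-\gamma K^{\mathcal{A}}_{d_{\mathcal{S}},W}(T)}$ (in the sense of $\limsup$).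
   Context: For $h:\mathcal{S}\times\mathcal{A}\to\mathbb{R}$, $K^{\mathcal{A}}_{d_{\mathcal{S}},\mathbb{R}}(h):=\sup_{a\in\mathcal{A}}\sup_{s_1\ne s_2}\frac{|h(s_1,a)-h(s_2,a)|}{d_{\mathcal{S}}(s_1,s_2)}$. $W$ is the first Wasserstein metric on distributions over $(\mathcal{S},d_{\mathcal{S}})$, and $K^{\mathcal{A}}_{d_{\mathcal{S}},W}(T):=\sup_{a}\sup_{s_1\ne s_2}\frac{W(T(\cdot\mid s_1,a),T(\cdot\mid s_2,a))}{d_{\mathcal{S}}(s_1,s_2)}$. The $\epsilon$-greedy operator is $x\mapsto(1-\epsilon)\max_i x_i+\epsilon\,\mathrm{mean}(x)$. The listed operators are Lipschitz with constant $1$ from $(\mathbb{R}^{|\mathcal{A}|},\|\cdot\|_\infty)$ to $\mathbb{R}$. *)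

theory Defs
  imports "HOL-Probability.Probability"
begin

definition lipA :: "'a set \<Rightarrow> ('s::metric_space \<Rightarrow> 'a \<Rightarrow> real) \<Rightarrow> ennreal" where
  "lipA A h = (SUP a\<in>A. SUP p\<in>{p::'s\<times>'s. fst p \<noteq> snd p}.
      ennreal (\<bar>h (fst p) a - h (snd p) a\<bar> / dist (fst p) (snd p)))"

definition couplings :: "'s::metric_space measure \<Rightarrow> 's measure \<Rightarrow> ('s \<times> 's) measure set" where
  "couplings \<mu> \<nu> = {\<pi>. sets \<pi> = sets (borel :: ('s \<times> 's) measure)
      \<and> distr \<pi> borel fst = \<mu> \<and> distr \<pi> borel snd = \<nu>}"

definition wasserstein1 :: "'s::metric_space measure \<Rightarrow> 's measure \<Rightarrow> ennreal" where
  "wasserstein1 \<mu> \<nu> = (INF \<pi>\<in>couplings \<mu> \<nu>. \<integral>\<^sup>+ p. ennreal (dist (fst p) (snd p)) \<partial>\<pi>)"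

definition lipW :: "'a set \<Rightarrow> ('s::metric_space \<Rightarrow> 'a \<Rightarrow> 's measure) \<Rightarrow> ennreal" where
  "lipW A T = (SUP a\<in>A. SUP p\<in>{p::'s\<times>'s. fst p \<noteq> snd p}.
      wasserstein1 (T (fst p) a) (T (snd p) a) / ennreal (dist (fst p) (snd p)))"

definition max_op :: "'a set \<Rightarrow> ('a \<Rightarrow> real) \<Rightarrow> real" where
  "max_op A x = Max (x ` A)"

definition mean_op :: "'a set \<Rightarrow> ('a \<Rightarrow> real) \<Rightarrow> real" where
  "mean_op A x = (\<Sum>a\<in>A. x a) / real (card A)"

definition eps_greedy_op :: "real \<Rightarrow> 'a set \<Rightarrow> ('a \<Rightarrow> real) \<Rightarrow> real" where
  "eps_greedy_op \<epsilon> A x = (1 - \<epsilon>) * max_op A x + \<epsilon> * mean_op A x"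

definition mellowmax_op :: "real \<Rightarrow> 'a set \<Rightarrow> ('a \<Rightarrow> real) \<Rightarrow> real" where
  "mellowmax_op \<beta> A x = ln ((\<Sum>a\<in>A. exp (\<beta> * x a)) / real (card A)) / \<beta>"

definition backup_ops :: "'a set \<Rightarrow> (('a \<Rightarrow> real) \<Rightarrow> real) set" where
  "backup_ops A = {max_op A, mean_op A}
     \<union> {eps_greedy_op \<epsilon> A | \<epsilon>. 0 \<le> \<epsilon> \<and> \<epsilon> \<le> 1}
     \<union> {mellowmax_op \<beta> A | \<beta>. 0 < \<beta>}"

end

theory Submission
  imports Defs
begin

text \<open>Every backup operator is non-expansive for the sup norm on action vectors, so
  \<open>s \<mapsto> f (Q\<^sub>n s)\<close> inherits the Lipschitz constant \<open>L\<^sub>n\<close> of \<open>Q\<^sub>n\<close>. Integrating an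
  \<open>L\<close>-Lipschitz function against two measures, and comparing along an almost optimal coupling,
  changes the value by at most \<open>L\<close> times their Wasserstein distance. Hence one GVI step gives
  \<open>L\<^sub>n\<^sub>+\<^sub>1 \<le> K(R) + c L\<^sub>n\<close> with \<open>c = \<gamma> K\<^sub>W(T) < 1\<close>, so
  \<open>L\<^sub>n \<le> c\<^sup>n L\<^sub>0 + K(R) / (1 - c)\<close>, and the limsup is at most \<open>K(R) / (1 - c)\<close>.\<close>

lemma lipA_le_ennrealI:
  fixes h :: "'s::metric_space \<Rightarrow> 'a \<Rightarrow> real"
  assumes "\<And>a. a \<in> A \<Longrightarrow> L-lipschitz_on UNIV (\<lambda>s. h s a)"
  shows "lipA A h \<le> ennreal L"
  unfolding lipA_def
proof (intro SUP_least)
  fix a and p :: "'s \<times> 's" assume a: "a \<in> A" and "p \<in> {p. fst p \<noteq> snd p}"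
  then have "dist (fst p) (snd p) > 0" by auto
  then show "ennreal (\<bar>h (fst p) a - h (snd p) a\<bar> / dist (fst p) (snd p)) \<le> ennreal L"
    using lipschitz_onD[OF assms[OF a], of "fst p" "snd p"]
    by (intro ennreal_leI) (simp add: divide_le_eq dist_real_def)
qed

lemma lipschitz_on_lipA:
  fixes h :: "'s::metric_space \<Rightarrow> 'a \<Rightarrow> real"
  assumes "lipA A h < \<infinity>" "a \<in> A"
  shows "(enn2real (lipA A h))-lipschitz_on UNIV (\<lambda>s. h s a)"
proof (rule lipschitz_onI)
  fix x y :: 's
  show "dist (h x a) (h y a) \<le> enn2real (lipA A h) * dist x y"
  proof (cases "x = y")
    case False
    then have "ennreal (\<bar>h x a - h y a\<bar> / dist x y) \<le> lipA A h"
      unfolding lipA_def by (intro SUP_upper2[OF assms(2)] SUP_upper2[where i="(x, y)"]) auto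
    then have "enn2real (ennreal (\<bar>h x a - h y a\<bar> / dist x y)) \<le> enn2real (lipA A h)"
      using assms(1) by (intro enn2real_mono) auto
    then have "\<bar>h x a - h y a\<bar> / dist x y \<le> enn2real (lipA A h)" by simp
    then show ?thesis using False by (simp add: divide_le_eq dist_real_def)
  qed simp
qed simp

lemma wasserstein1_le_lipW:
  assumes "a \<in> A" "x \<noteq> y"
  shows "wasserstein1 (T x a) (T y a) \<le> lipW A T * ennreal (dist x y)"
proof -
  have "wasserstein1 (T x a) (T y a) / ennreal (dist x y) \<le> lipW A T"
    unfolding lipW_def by (intro SUP_upper2[OF assms(1)] SUP_upper2[where i="(x, y)"]) (use assms in auto)
  then have "wasserstein1 (T x a) (T y a) / ennreal (dist x y) * ennreal (dist x y)
      \<le> lipW A T * ennreal (dist x y)"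
    by (rule mult_right_mono) simp
  then show ?thesis using assms(2) by (simp add: ennreal_divide_times)
qed

lemma max_op_le_shift:
  assumes "finite A" "A \<noteq> {}" "\<And>a. a \<in> A \<Longrightarrow> x a \<le> y a + e"
  shows "max_op A x \<le> max_op A y + e"
proof -
  have "Max (x ` A) \<in> x ` A" using assms(1,2) by (intro Max_in) auto
  then obtain a where a: "a \<in> A" "max_op A x = x a" unfolding max_op_def by auto
  have "y a \<le> max_op A y" unfolding max_op_def using a assms(1) by (intro Max_ge) auto
  then show ?thesis using a assms(3)[of a] by simp
qed

lemma mean_op_le_shift:
  assumes "finite A" "A \<noteq> {}" "\<And>a. a \<in> A \<Longrightarrow> x a \<le> y a + e"
  shows "mean_op A x \<le> mean_op A y + e"
proof -
  have "(\<Sum>a\<in>A. x a) \<le> (\<Sum>a\<in>A. y a) + real (card A) * e"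
    using sum_mono[of A x "\<lambda>a. y a + e"] assms(3) by (simp add: sum.distrib)
  moreover have "real (card A) > 0" using assms(1,2) by (simp add: card_gt_0_iff)
  ultimately show ?thesis unfolding mean_op_def by (simp add: field_simps)
qed

lemma eps_greedy_op_le_shift:
  assumes "finite A" "A \<noteq> {}" "0 \<le> \<epsilon>" "\<epsilon> \<le> 1" "\<And>a. a \<in> A \<Longrightarrow> x a \<le> y a + e"
  shows "eps_greedy_op \<epsilon> A x \<le> eps_greedy_op \<epsilon> A y + e"
proof -
  have "(1 - \<epsilon>) * max_op A x \<le> (1 - \<epsilon>) * (max_op A y + e)"
    using assms by (intro mult_left_mono max_op_le_shift) auto
  moreover have "\<epsilon> * mean_op A x \<le> \<epsilon> * (mean_op A y + e)"
    using assms by (intro mult_left_mono mean_op_le_shift) auto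
  ultimately show ?thesis unfolding eps_greedy_op_def by (simp add: algebra_simps)
qed

lemma mellowmax_op_le_shift:
  assumes "finite A" "A \<noteq> {}" "0 < \<beta>" "\<And>a. a \<in> A \<Longrightarrow> x a \<le> y a + e"
  shows "mellowmax_op \<beta> A x \<le> mellowmax_op \<beta> A y + e"
proof -
  define S where "S z = (\<Sum>a\<in>A. exp (\<beta> * z a)) / real (card A)" for z :: "'a \<Rightarrow> real"
  have S_pos: "S z > 0" for z
    unfolding S_def using assms(1,2) by (intro divide_pos_pos sum_pos) (auto simp: card_gt_0_iff)
  have "(\<Sum>a\<in>A. exp (\<beta> * x a)) \<le> (\<Sum>a\<in>A. exp (\<beta> * e) * exp (\<beta> * y a))"
  proof (rule sum_mono)
    fix a assume "a \<in> A"
    then have "\<beta> * x a \<le> \<beta> * e + \<beta> * y a"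
      using assms(3,4) by (simp add: distrib_left[symmetric] add.commute)
    then show "exp (\<beta> * x a) \<le> exp (\<beta> * e) * exp (\<beta> * y a)" by (simp add: exp_add[symmetric])
  qed
  then have "S x \<le> exp (\<beta> * e) * S y"
    unfolding S_def by (simp add: sum_distrib_left[symmetric] divide_right_mono)
  then have "ln (S x) \<le> ln (exp (\<beta> * e) * S y)" using S_pos by simp
  also have "\<dots> = \<beta> * e + ln (S y)" using S_pos[of y] by (simp add: ln_mult)
  finally show ?thesis unfolding mellowmax_op_def S_def[symmetric] using assms(3)
    by (simp add: field_simps)
qed

lemma backup_op_le_shift:
  assumes "finite A" "A \<noteq> {}" "f \<in> backup_ops A" "\<And>a. a \<in> A \<Longrightarrow> x a \<le> y a + e"
  shows "f x \<le> f y + e"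
proof -
  consider "f = max_op A" | "f = mean_op A" | \<epsilon> where "f = eps_greedy_op \<epsilon> A" "0 \<le> \<epsilon>" "\<epsilon> \<le> 1"
    | \<beta> where "f = mellowmax_op \<beta> A" "0 < \<beta>"
    using assms(3) unfolding backup_ops_def by blast
  then show ?thesis
    by cases (auto intro!: max_op_le_shift mean_op_le_shift eps_greedy_op_le_shift
        mellowmax_op_le_shift assms(1,2,4))
qed

lemma lipschitz_on_backup_op:
  assumes "finite A" "A \<noteq> {}" "f \<in> backup_ops A"
    and "\<And>a. a \<in> A \<Longrightarrow> L-lipschitz_on U (\<lambda>s. Q s a)"
  shows "L-lipschitz_on U (\<lambda>s. f (Q s))"
proof (rule lipschitz_onI)
  fix x y assume "x \<in> U" "y \<in> U"
  then have "\<bar>Q x a - Q y a\<bar> \<le> L * dist x y" if "a \<in> A" for a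
    using lipschitz_onD[OF assms(4)[OF that]] by (simp add: dist_real_def)
  then have "f (Q x) \<le> f (Q y) + L * dist x y" "f (Q y) \<le> f (Q x) + L * dist x y"
    by (intro backup_op_le_shift[OF assms(1-3)]; force simp: abs_le_iff)+
  then show "dist (f (Q x)) (f (Q y)) \<le> L * dist x y" by (simp add: dist_real_def abs_le_iff)
next
  show "0 \<le> L" using assms(2,4) lipschitz_on_nonneg by blast
qed

lemma integrable_iff_abs_diff_le:
  fixes u v :: "'a \<Rightarrow> real"
  assumes d: "integrable M d" and u: "u \<in> borel_measurable M" and v: "v \<in> borel_measurable M"
    and diff: "\<And>x. \<bar>u x - v x\<bar> \<le> d x"
  shows "integrable M u \<longleftrightarrow> integrable M v"
proof -
  have *: "integrable M w'"
    if "integrable M w" "w' \<in> borel_measurable M" "\<And>x. \<bar>w x - w' x\<bar> \<le> d x" for w w'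
  proof (rule Bochner_Integration.integrable_bound[where f="\<lambda>x. \<bar>w x\<bar> + d x"])
    show "integrable M (\<lambda>x. \<bar>w x\<bar> + d x)" using that(1) d by simp
    show "AE x in M. norm (w' x) \<le> norm (\<bar>w x\<bar> + d x)"
      using that(3) by (intro AE_I2) (smt (verit) real_norm_def)
  qed fact
  show ?thesis
    using *[OF _ v diff] *[OF _ u, of v] diff by (auto simp: abs_minus_commute)
qed

lemma integral_diff_le_coupling:
  fixes g :: "'s::metric_space \<Rightarrow> real"
  assumes g: "L-lipschitz_on UNIV g" and \<pi>: "\<pi> \<in> couplings \<mu> \<nu>"
    and cost: "(\<integral>\<^sup>+p. ennreal (dist (fst p) (snd p)) \<partial>\<pi>) \<le> ennreal C" and "0 \<le> C"
  shows "\<bar>integral\<^sup>L \<mu> g - integral\<^sup>L \<nu> g\<bar> \<le> L * C"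
proof -
  have sets_\<pi>: "sets \<pi> = sets (borel :: ('s \<times> 's) measure)"
    and \<mu>: "\<mu> = distr \<pi> borel fst" and \<nu>: "\<nu> = distr \<pi> borel snd"
    using \<pi> unfolding couplings_def by auto
  note measurable_\<pi> = measurable_cong_sets[OF sets_\<pi> refl]
  have L: "0 \<le> L" and g_diff: "\<bar>g x - g y\<bar> \<le> L * dist x y" for x y
    using lipschitz_on_nonneg[OF g] lipschitz_onD[OF g] by (auto simp: dist_real_def)
  have g_meas: "g \<in> borel_measurable borel"
    using lipschitz_on_continuous_on[OF g] by (rule borel_measurable_continuous_onI)
  have fst_meas: "fst \<in> \<pi> \<rightarrow>\<^sub>M (borel :: 's measure)" and snd_meas: "snd \<in> \<pi> \<rightarrow>\<^sub>M (borel :: 's measure)"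
    and dist_meas: "(\<lambda>p. dist (fst p) (snd p)) \<in> borel_measurable \<pi>"
    unfolding measurable_\<pi> by (intro borel_measurable_continuous_onI continuous_intros)+
  have dist_int: "integrable \<pi> (\<lambda>p. dist (fst p) (snd p))"
    using dist_meas le_less_trans[OF cost ennreal_less_top] by (intro integrableI_bounded) auto
  have dist_le: "(\<integral>p. dist (fst p) (snd p) \<partial>\<pi>) \<le> C"
    using cost \<open>0 \<le> C\<close> dist_meas by (subst integral_eq_nn_integral) (auto intro: enn2real_leI)
  have \<mu>_int: "integral\<^sup>L \<mu> g = (\<integral>p. g (fst p) \<partial>\<pi>)" unfolding \<mu> by (rule integral_distr[OF fst_meas g_meas])
  have \<nu>_int: "integral\<^sup>L \<nu> g = (\<integral>p. g (snd p) \<partial>\<pi>)" unfolding \<nu> by (rule integral_distr[OF snd_meas g_meas])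
  have g_fst_meas: "(\<lambda>p. g (fst p)) \<in> borel_measurable \<pi>"
    and g_snd_meas: "(\<lambda>p. g (snd p)) \<in> borel_measurable \<pi>"
    using g_meas fst_meas snd_meas by measurable
  have integrable_iff: "integrable \<pi> (\<lambda>p. g (fst p)) \<longleftrightarrow> integrable \<pi> (\<lambda>p. g (snd p))"
    using g_fst_meas g_snd_meas g_diff
    by (intro integrable_iff_abs_diff_le[OF integrable_mult_right[OF dist_int, of L]]) auto
  show ?thesis
  proof (cases "integrable \<pi> (\<lambda>p. g (fst p))")
    case True
    then have "\<bar>integral\<^sup>L \<mu> g - integral\<^sup>L \<nu> g\<bar> = \<bar>\<integral>p. g (fst p) - g (snd p) \<partial>\<pi>\<bar>"
      using integrable_iff by (simp add: \<mu>_int \<nu>_int)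
    also have "\<dots> \<le> (\<integral>p. \<bar>g (fst p) - g (snd p)\<bar> \<partial>\<pi>)" by (rule integral_abs_bound)
    also have "\<dots> \<le> (\<integral>p. L * dist (fst p) (snd p) \<partial>\<pi>)"
      using True integrable_iff dist_int g_diff by (intro integral_mono) auto
    also have "\<dots> \<le> L * C" using dist_le L by (simp add: mult_left_mono)
    finally show ?thesis .
  next
    case False
    \<comment> \<open>Bochner integrals of non-integrable functions are 0 by convention.\<close>
    then show ?thesis
      using integrable_iff L \<open>0 \<le> C\<close> by (simp add: \<mu>_int \<nu>_int not_integrable_integral_eq)
  qed
qed

lemma integral_diff_le_wasserstein1:
  fixes g :: "'s::metric_space \<Rightarrow> real"
  assumes g: "L-lipschitz_on UNIV g" and W: "wasserstein1 \<mu> \<nu> \<le> ennreal w" and "0 \<le> w"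
  shows "\<bar>integral\<^sup>L \<mu> g - integral\<^sup>L \<nu> g\<bar> \<le> L * w"
proof (rule field_le_epsilon)
  fix e :: real assume "0 < e"
  define \<delta> where "\<delta> = e / (L + 1)"
  have L: "0 \<le> L" using lipschitz_on_nonneg[OF g] .
  have \<delta>: "0 < \<delta>" "L * \<delta> \<le> e"
    using \<open>0 < e\<close> L unfolding \<delta>_def by (auto simp: field_simps)
  have "wasserstein1 \<mu> \<nu> < ennreal (w + \<delta>)"
    using W \<open>0 \<le> w\<close> \<delta>(1) by (auto intro: le_less_trans simp: ennreal_lessI)
  then obtain \<pi> where "\<pi> \<in> couplings \<mu> \<nu>"
    and "(\<integral>\<^sup>+p. ennreal (dist (fst p) (snd p)) \<partial>\<pi>) < ennreal (w + \<delta>)"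
    unfolding wasserstein1_def INF_less_iff by blast
  then have "\<bar>integral\<^sup>L \<mu> g - integral\<^sup>L \<nu> g\<bar> \<le> L * (w + \<delta>)"
    using \<open>0 \<le> w\<close> \<delta>(1) by (intro integral_diff_le_coupling[OF g]) auto
  then show "\<bar>integral\<^sup>L \<mu> g - integral\<^sup>L \<nu> g\<bar> \<le> L * w + e"
    using \<delta>(2) by (simp add: algebra_simps)
qed

lemma limsup_le_geometric_bound:
  fixes X :: "nat \<Rightarrow> ennreal"
  assumes "0 \<le> c" "c < 1" "\<And>n. X n \<le> ennreal (c ^ n * b + M)"
  shows "limsup X \<le> ennreal M"
proof -
  have "(\<lambda>n. c ^ n * b + M) \<longlonglongrightarrow> 0 * b + M"
    using assms(1,2) by (intro tendsto_intros LIMSEQ_power_zero) auto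
  then have "(\<lambda>n. ennreal (c ^ n * b + M)) \<longlonglongrightarrow> ennreal M" by (intro tendsto_ennrealI) simp
  then have "limsup (\<lambda>n. ennreal (c ^ n * b + M)) = ennreal M" by (intro lim_imp_Limsup) simp_all
  moreover have "limsup X \<le> limsup (\<lambda>n. ennreal (c ^ n * b + M))"
    using assms(3) by (intro Limsup_mono) simp
  ultimately show ?thesis by simp
qed

lemma lipschitz_on_gvi_step:
  fixes R Q :: "'s::metric_space \<Rightarrow> 'a \<Rightarrow> real" and T :: "'s \<Rightarrow> 'a \<Rightarrow> 's measure"
  assumes A: "finite A" "A \<noteq> {}" and f: "f \<in> backup_ops A" and "0 \<le> \<gamma>" "0 \<le> c"
    and T_lip: "ennreal \<gamma> * lipW A T \<le> ennreal c"
    and R_lip: "\<rho>-lipschitz_on UNIV (\<lambda>s. R s a)"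
    and Q_lip: "\<And>a. a \<in> A \<Longrightarrow> L-lipschitz_on UNIV (\<lambda>s. Q s a)"
    and a: "a \<in> A"
  shows "(\<rho> + c * L)-lipschitz_on UNIV (\<lambda>s. R s a + \<gamma> * (\<integral>s'. f (Q s') \<partial>T s a))"
proof -
  have G: "L-lipschitz_on UNIV (\<lambda>s'. f (Q s'))" using lipschitz_on_backup_op[OF A f Q_lip] .
  have L: "0 \<le> L" using lipschitz_on_nonneg[OF G] .
  have "(c * L)-lipschitz_on UNIV (\<lambda>s. \<gamma> * (\<integral>s'. f (Q s') \<partial>T s a))"
  proof (rule lipschitz_onI)
    fix x y :: 's
    show "dist (\<gamma> * (\<integral>s'. f (Q s') \<partial>T x a)) (\<gamma> * (\<integral>s'. f (Q s') \<partial>T y a)) \<le> c * L * dist x y"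
    proof (cases "\<gamma> = 0 \<or> x = y")
      case True
      then show ?thesis using \<open>0 \<le> c\<close> L by auto
    next
      case False
      then have "0 < \<gamma>" "x \<noteq> y" using \<open>0 \<le> \<gamma>\<close> by auto
      have "ennreal \<gamma> * wasserstein1 (T x a) (T y a) \<le> ennreal \<gamma> * lipW A T * ennreal (dist x y)"
        using wasserstein1_le_lipW[OF a \<open>x \<noteq> y\<close>] by (simp add: mult.assoc mult_left_mono)
      also have "\<dots> \<le> ennreal c * ennreal (dist x y)" using T_lip by (rule mult_right_mono) simp
      also have "\<dots> = ennreal \<gamma> * ennreal (c * dist x y / \<gamma>)"
        using \<open>0 < \<gamma>\<close> \<open>0 \<le> c\<close> by (simp add: ennreal_mult[symmetric])
      finally have "wasserstein1 (T x a) (T y a) \<le> ennreal (c * dist x y / \<gamma>)"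
        using \<open>0 < \<gamma>\<close> by (simp add: ennreal_mult_le_mult_iff)
      then have "\<bar>(\<integral>s'. f (Q s') \<partial>T x a) - (\<integral>s'. f (Q s') \<partial>T y a)\<bar> \<le> L * (c * dist x y / \<gamma>)"
        using \<open>0 < \<gamma>\<close> \<open>0 \<le> c\<close> by (intro integral_diff_le_wasserstein1[OF G]) auto
      then have "\<gamma> * \<bar>(\<integral>s'. f (Q s') \<partial>T x a) - (\<integral>s'. f (Q s') \<partial>T y a)\<bar> \<le> c * L * dist x y"
        using \<open>0 < \<gamma>\<close> by (simp add: field_simps)
      then show ?thesis using \<open>0 < \<gamma>\<close> by (simp add: dist_real_def abs_mult flip: right_diff_distrib)
    qed
  qed (use \<open>0 \<le> c\<close> L in simp)
  then show ?thesis using lipschitz_on_add[OF R_lip] by blast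
qed

lemma lipschitz_on_gvi_iterate:
  fixes R :: "'s::metric_space \<Rightarrow> 'a \<Rightarrow> real" and Q :: "nat \<Rightarrow> 's \<Rightarrow> 'a \<Rightarrow> real"
  assumes A: "finite A" "A \<noteq> {}" and f: "f \<in> backup_ops A" and "0 \<le> \<gamma>" "0 \<le> c" "c < 1"
    and T_lip: "ennreal \<gamma> * lipW A T \<le> ennreal c"
    and R_lip: "\<And>a. a \<in> A \<Longrightarrow> \<rho>-lipschitz_on UNIV (\<lambda>s. R s a)"
    and Q0_lip: "\<And>a. a \<in> A \<Longrightarrow> l0-lipschitz_on UNIV (\<lambda>s. Q 0 s a)"
    and GVI: "\<And>n s a. a \<in> A \<Longrightarrow> Q (Suc n) s a = R s a + \<gamma> * (\<integral>s'. f (Q n s') \<partial>T s a)"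
    and a: "a \<in> A"
  shows "(c ^ n * l0 + \<rho> / (1 - c))-lipschitz_on UNIV (\<lambda>s. Q n s a)"
  using a
proof (induction n arbitrary: a)
  case 0
  have "0 \<le> \<rho>" using R_lip[OF 0] lipschitz_on_nonneg by blast
  then show ?case
    using Q0_lip[OF 0] \<open>c < 1\<close> by (elim lipschitz_on_le) simp
next
  case (Suc n)
  have "(\<rho> + c * (c ^ n * l0 + \<rho> / (1 - c)))-lipschitz_on UNIV
      (\<lambda>s. R s a + \<gamma> * (\<integral>s'. f (Q n s') \<partial>T s a))"
    using Suc by (intro lipschitz_on_gvi_step[OF A f \<open>0 \<le> \<gamma>\<close> \<open>0 \<le> c\<close> T_lip R_lip])
  moreover have "\<rho> + c * (c ^ n * l0 + \<rho> / (1 - c)) = c ^ Suc n * l0 + \<rho> / (1 - c)"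
    using \<open>c < 1\<close> by (simp add: field_simps)
  ultimately show ?case using GVI[OF Suc.prems] by simp
qed

theorem theorem3:
  fixes A :: "'a set" and \<gamma> :: real
    and R :: "'s::metric_space \<Rightarrow> 'a \<Rightarrow> real"
    and T :: "'s \<Rightarrow> 'a \<Rightarrow> 's measure"
    and f :: "('a \<Rightarrow> real) \<Rightarrow> real"
    and Q :: "nat \<Rightarrow> 's \<Rightarrow> 'a \<Rightarrow> real"
  assumes A_fin: "finite A" and A_ne: "A \<noteq> {}"
    and gamma: "0 \<le> \<gamma>" "\<gamma> < 1"
    and R_lip: "lipA A R < \<infinity>"
    and T_prob: "\<And>s a. a \<in> A \<Longrightarrow> prob_space (T s a)"
    and T_sets: "\<And>s a. a \<in> A \<Longrightarrow> sets (T s a) = sets borel"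
    and T_lip: "ennreal \<gamma> * lipW A T < 1"
    and f_op: "f \<in> backup_ops A"
    and Q0_lip: "lipA A (Q 0) < \<infinity>"
    and GVI: "\<And>n s a. a \<in> A \<Longrightarrow>
       Q (Suc n) s a = R s a + \<gamma> * (\<integral>s'. f (Q n s') \<partial>(T s a))"
  shows "limsup (\<lambda>n. lipA A (Q n)) \<le> lipA A R / (1 - ennreal \<gamma> * lipW A T)"
proof -
  define \<rho> where "\<rho> = enn2real (lipA A R)"
  define c where "c = enn2real (ennreal \<gamma> * lipW A T)"
  define l0 where "l0 = enn2real (lipA A (Q 0))"
  have c: "ennreal c = ennreal \<gamma> * lipW A T"
    unfolding c_def using T_lip ennreal_1 ennreal_less_top by (intro ennreal_enn2real) (metis less_trans less_top)
  have "0 \<le> c" unfolding c_def by simp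
  have "c < 1" using T_lip by (simp flip: c)
  have "(c ^ n * l0 + \<rho> / (1 - c))-lipschitz_on UNIV (\<lambda>s. Q n s a)" if "a \<in> A" for n a
    unfolding \<rho>_def l0_def using c lipschitz_on_lipA[OF R_lip] lipschitz_on_lipA[OF Q0_lip]
    by (intro lipschitz_on_gvi_iterate[where R = R and Q = Q and T = T,
          OF A_fin A_ne f_op gamma(1) \<open>0 \<le> c\<close> \<open>c < 1\<close> _ _ _ GVI that]) simp_all
  then have "limsup (\<lambda>n. lipA A (Q n)) \<le> ennreal (\<rho> / (1 - c))"
    using \<open>0 \<le> c\<close> \<open>c < 1\<close> by (intro limsup_le_geometric_bound lipA_le_ennrealI)
  also have "\<dots> = ennreal \<rho> / ennreal (1 - c)"
    using \<open>c < 1\<close> by (simp add: \<rho>_def divide_ennreal)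
  also have "\<dots> = lipA A R / (1 - ennreal \<gamma> * lipW A T)"
    using R_lip \<open>0 \<le> c\<close> by (simp add: \<rho>_def c[symmetric] ennreal_minus[symmetric])
  finally show ?thesis .
qed

end
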